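(* Let $f:\mathbb{R}^d\to\mathbb{R}$ be differentiable with $L$-Lipschitz continuous gradient $\nabla f$. Consider the SUM iteration with $\mu\in[0,1)$, $\lambda\in[0,1/(1-\mu)]$ and positive step sizes $\{\eta_t\}$, where the noisy gradients satisfy $\mathbb{E}_t[g_t]=\nabla f(x_t)$ and $\mathbb{E}\|g_t\|^2\le G^2$ for all $t$. Then for every $t\ge1$, $$\mathbb{E}\big[\nabla f(x_t)^T m_t\big]\le -\sum_{k=1}^{t}\mu^{t-k}\eta_k\,\mathbb{E}\|\nabla f(x_k)\|^2+2L\sum_{k=1}^{t-1}\mu^{t-k}\,\mathbb{E}\|m_k\|^2+L\lambda^2G^2\sum_{k=1}^{t-1}\mu^{t-k}\eta_k^2 .$$
   Context: Stochastic unified momentum (SUM) iteration: given $x_1\in\mathbb{R}^d$, set $m_0=0$ and for $t=1,2,\dots$ $$m_t=\mu m_{t-1}-\eta_t g_t,\qquad x_{t+1}=x_t-\lambda\eta_t g_t+(1-\tilde\lambda)m_t,\qquad \tilde\lambda:=(1-\mu)\lambda,$$ where $g_t\in\mathbb{R}^d$ is a random vector (noisy gradient). $\mathbb{E}_t[\cdot]$ denotes the conditional expectation given $g_1,\dots,g_{t-1}$ (so $x_t$ and $m_{t-1}$ are determined by the conditioning), and $\mathbb{E}$ the total expectation. Norms are Euclidean. *)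

theory Defs
  imports "HOL-Analysis.Analysis" "HOL-Probability.Probability"
begin

text \<open>State of the SUM iteration: sum_state mu lam eta x1 g n = (x_(n+1), m_n),
  with m_0 = 0 and lambda-tilde = (1 - mu) * lam.\<close>
fun sum_state :: "real \<Rightarrow> real \<Rightarrow> (nat \<Rightarrow> real) \<Rightarrow> 'd::real_vector \<Rightarrow> (nat \<Rightarrow> 'd) \<Rightarrow> nat \<Rightarrow> 'd \<times> 'd" where
  "sum_state mu lam eta x1 g 0 = (x1, 0)"
| "sum_state mu lam eta x1 g (Suc n) =
     (let x = fst (sum_state mu lam eta x1 g n);
          m = snd (sum_state mu lam eta x1 g n);
          m' = mu *\<^sub>R m - eta (Suc n) *\<^sub>R g (Suc n);
          x' = x - (lam * eta (Suc n)) *\<^sub>R g (Suc n) + (1 - (1 - mu) * lam) *\<^sub>R m'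
      in (x', m'))"

definition sum_x :: "real \<Rightarrow> real \<Rightarrow> (nat \<Rightarrow> real) \<Rightarrow> 'd::real_vector \<Rightarrow> (nat \<Rightarrow> 'd) \<Rightarrow> nat \<Rightarrow> 'd" where
  "sum_x mu lam eta x1 g t = fst (sum_state mu lam eta x1 g (t - 1))"

definition sum_m :: "real \<Rightarrow> real \<Rightarrow> (nat \<Rightarrow> real) \<Rightarrow> 'd::real_vector \<Rightarrow> (nat \<Rightarrow> 'd) \<Rightarrow> nat \<Rightarrow> 'd" where
  "sum_m mu lam eta x1 g t = snd (sum_state mu lam eta x1 g t)"

text \<open>The sigma-algebra generated by g_1, ..., g_(t-1) (conditioning for E_t).\<close>
definition past_sigma :: "'a measure \<Rightarrow> (nat \<Rightarrow> 'a \<Rightarrow> 'd::euclidean_space) \<Rightarrow> nat \<Rightarrow> 'a measure" where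
  "past_sigma M g t = sigma (space M) {g k -` A \<inter> space M | k A. k \<in> {1..<t} \<and> A \<in> sets borel}"

end

theory Submission
  imports Defs
begin

text \<open>Since m_t = mu m_(t-1) - eta_t g_t and x_t depends only on g_1, ..., g_(t-1), unbiasedness
  (applied componentwise through the tower property) gives
  E[grad f(x_t) . m_t] = mu E[grad f(x_t) . m_(t-1)] - eta_t E|grad f(x_t)|^2.
  The iterate moves by x_t - x_(t-1) = - lam eta_(t-1) g_(t-1) + (1 - (1 - mu) lam) m_(t-1),
  whose second coefficient lies in [0, 1]; so the Lipschitz gradient and 2ab <= a^2 + b^2 replace
  grad f(x_t) by grad f(x_(t-1)) at the cost 2L E|m_(t-1)|^2 + L lam^2 G^2 eta_(t-1)^2.
  Unrolling this one-step recursion produces the discounted sums.\<close>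

lemma lipschitz_inner_displacement_le:
  fixes F :: "'a::real_inner \<Rightarrow> 'a"
  assumes lip: "L-lipschitz_on UNIV F" and c: "\<bar>c\<bar> \<le> 1"
  shows "F (y - s *\<^sub>R v + c *\<^sub>R m) \<bullet> m \<le> F y \<bullet> m + L * (s\<^sup>2 * (norm v)\<^sup>2 + 2 * (norm m)\<^sup>2)"
proof -
  define z where "z = y - s *\<^sub>R v + c *\<^sub>R m"
  have L: "0 \<le> L" using lip by (rule lipschitz_on_nonneg)
  have "norm (z - y) \<le> \<bar>s\<bar> * norm v + \<bar>c\<bar> * norm m"
    using norm_triangle_ineq4[of "c *\<^sub>R m" "s *\<^sub>R v"] by (simp add: z_def algebra_simps)
  also have "\<dots> \<le> \<bar>s\<bar> * norm v + norm m"
    using c by (simp add: mult_left_le_one_le)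
  finally have zy: "norm (z - y) \<le> \<bar>s\<bar> * norm v + norm m" .
  have "(F z - F y) \<bullet> m \<le> norm (F z - F y) * norm m"
    by (rule norm_cauchy_schwarz)
  also have "\<dots> \<le> L * norm (z - y) * norm m"
    using lipschitz_onD[OF lip, of z y] by (simp add: dist_norm mult_right_mono)
  also have "\<dots> \<le> L * ((\<bar>s\<bar> * norm v + norm m) * norm m)"
    using zy L by (simp add: mult.assoc mult_left_mono mult_right_mono)
  also have "\<dots> \<le> L * ((\<bar>s\<bar> * norm v)\<^sup>2 + 2 * (norm m)\<^sup>2)"
  proof (rule mult_left_mono[OF _ L])
    define u where "u = \<bar>s\<bar> * norm v"
    have "2 * u * norm m \<le> u\<^sup>2 + (norm m)\<^sup>2" by (rule sum_squares_bound)
    moreover have "0 \<le> u * norm m" by (simp add: u_def)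
    ultimately show "(u + norm m) * norm m \<le> u\<^sup>2 + 2 * (norm m)\<^sup>2"
      by (simp add: algebra_simps power2_eq_square)
  qed
  finally show ?thesis
    by (simp add: z_def inner_diff_left power_mult_distrib)
qed

lemma discounted_sum_Suc:
  fixes mu :: real
  shows "mu * (\<Sum>k=1..n. mu ^ (n - k) * a k) = (\<Sum>k=1..n. mu ^ (Suc n - k) * a k)"
  by (simp add: sum_distrib_left Suc_diff_le mult.assoc)

lemma discounted_recursion_le:
  fixes A a b :: "nat \<Rightarrow> real"
  assumes mu: "0 \<le> mu"
    and base: "A 1 \<le> - a 1"
    and step: "\<And>n. n \<ge> 1 \<Longrightarrow> A (Suc n) \<le> mu * (A n + b n) - a (Suc n)"
    and t: "t \<ge> 1"
  shows "A t \<le> - (\<Sum>k=1..t. mu ^ (t - k) * a k) + (\<Sum>k=1..t-1. mu ^ (t - k) * b k)"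
  using t
proof (induction t rule: dec_induct)
  case base
  then show ?case using assms(2) by simp
next
  case (step n)
  have "A (Suc n) \<le> mu * (A n + b n) - a (Suc n)"
    using step.hyps(1) by (rule assms(3))
  also have "\<dots> \<le> mu * (- (\<Sum>k=1..n. mu ^ (n - k) * a k) + (\<Sum>k=1..n-1. mu ^ (n - k) * b k) + b n)
                   - a (Suc n)"
    using step.IH mu by (simp add: mult_left_mono)
  also have "\<dots> = - (\<Sum>k=1..Suc n. mu ^ (Suc n - k) * a k) + (\<Sum>k=1..n. mu ^ (Suc n - k) * b k)"
  proof -
    have "(\<Sum>k=1..n. mu ^ (n - k) * b k) = (\<Sum>k=1..n-1. mu ^ (n - k) * b k) + b n"
      using step.hyps(1) by (cases n) (simp_all add: sum.atLeast1_atMost_eq)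
    then have "mu * ((\<Sum>k=1..n-1. mu ^ (n - k) * b k) + b n) = (\<Sum>k=1..n. mu ^ (Suc n - k) * b k)"
      by (metis discounted_sum_Suc)
    moreover have "(\<Sum>k=1..Suc n. mu ^ (Suc n - k) * a k) = mu * (\<Sum>k=1..n. mu ^ (n - k) * a k) + a (Suc n)"
      using discounted_sum_Suc[of mu n a] by simp
    ultimately show ?thesis by (simp add: algebra_simps)
  qed
  finally show ?case by simp
qed

definition square_integrable :: "'a measure \<Rightarrow> ('a \<Rightarrow> 'b::{real_normed_vector,second_countable_topology}) \<Rightarrow> bool"
  where "square_integrable M h \<longleftrightarrow> h \<in> borel_measurable M \<and> integrable M (\<lambda>\<omega>. (norm (h \<omega>))\<^sup>2)"

lemma square_integrable_const: "finite_measure M \<Longrightarrow> square_integrable M (\<lambda>_. c)"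
  unfolding square_integrable_def by (auto intro: finite_measure.integrable_const)

lemma square_integrable_bound:
  assumes "square_integrable M r" "h \<in> borel_measurable M"
    and "\<And>\<omega>. \<omega> \<in> space M \<Longrightarrow> norm (h \<omega>) \<le> norm (r \<omega>)"
  shows "square_integrable M h"
  unfolding square_integrable_def
proof
  show "integrable M (\<lambda>\<omega>. (norm (h \<omega>))\<^sup>2)"
  proof (rule Bochner_Integration.integrable_bound)
    show "integrable M (\<lambda>\<omega>. (norm (r \<omega>))\<^sup>2)"
      using assms(1) by (simp add: square_integrable_def)
    show "AE \<omega> in M. norm ((norm (h \<omega>))\<^sup>2) \<le> norm ((norm (r \<omega>))\<^sup>2)"
      using assms(3) by (auto intro!: power_mono)
  qed (use assms(2) in measurable)
qed fact

lemma square_integrable_add: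
  assumes "square_integrable M h1" "square_integrable M h2"
  shows "square_integrable M (\<lambda>\<omega>. h1 \<omega> + h2 \<omega>)"
  unfolding square_integrable_def
proof
  show "integrable M (\<lambda>\<omega>. (norm (h1 \<omega> + h2 \<omega>))\<^sup>2)"
  proof (rule Bochner_Integration.integrable_bound)
    show "integrable M (\<lambda>\<omega>. 2 * (norm (h1 \<omega>))\<^sup>2 + 2 * (norm (h2 \<omega>))\<^sup>2)"
      using assms by (auto simp: square_integrable_def)
    show "AE \<omega> in M. norm ((norm (h1 \<omega> + h2 \<omega>))\<^sup>2) \<le> norm (2 * (norm (h1 \<omega>))\<^sup>2 + 2 * (norm (h2 \<omega>))\<^sup>2)"
    proof (rule AE_I2)
      fix \<omega>
      have "(norm (h1 \<omega> + h2 \<omega>))\<^sup>2 \<le> (norm (h1 \<omega>) + norm (h2 \<omega>))\<^sup>2"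
        by (simp add: norm_triangle_ineq power_mono)
      also have "\<dots> \<le> 2 * (norm (h1 \<omega>))\<^sup>2 + 2 * (norm (h2 \<omega>))\<^sup>2"
        using sum_squares_bound[of "norm (h1 \<omega>)" "norm (h2 \<omega>)"] by (simp add: power2_sum)
      finally show "norm ((norm (h1 \<omega> + h2 \<omega>))\<^sup>2) \<le> norm (2 * (norm (h1 \<omega>))\<^sup>2 + 2 * (norm (h2 \<omega>))\<^sup>2)"
        by simp
    qed
  qed (use assms in \<open>auto simp: square_integrable_def\<close>)
qed (use assms in \<open>auto simp: square_integrable_def\<close>)

lemma square_integrable_scaleR:
  "square_integrable M h \<Longrightarrow> square_integrable M (\<lambda>\<omega>. c *\<^sub>R h \<omega>)"
  unfolding square_integrable_def by (auto simp: power_mult_distrib)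

lemma square_integrable_diff:
  assumes "square_integrable M h1" "square_integrable M h2"
  shows "square_integrable M (\<lambda>\<omega>. h1 \<omega> - h2 \<omega>)"
  using square_integrable_add[OF assms(1) square_integrable_scaleR[OF assms(2), of "-1"]] by simp

lemma square_integrable_inner_integrable:
  fixes h1 h2 :: "'a \<Rightarrow> 'b::{real_inner,second_countable_topology}"
  assumes "square_integrable M h1" "square_integrable M h2"
  shows "integrable M (\<lambda>\<omega>. h1 \<omega> \<bullet> h2 \<omega>)"
proof (rule Bochner_Integration.integrable_bound)
  show "integrable M (\<lambda>\<omega>. (norm (h1 \<omega>))\<^sup>2 + (norm (h2 \<omega>))\<^sup>2)"
    using assms by (auto simp: square_integrable_def)
  show "AE \<omega> in M. norm (h1 \<omega> \<bullet> h2 \<omega>) \<le> norm ((norm (h1 \<omega>))\<^sup>2 + (norm (h2 \<omega>))\<^sup>2)"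
  proof (rule AE_I2)
    fix \<omega>
    have "norm (h1 \<omega> \<bullet> h2 \<omega>) \<le> norm (h1 \<omega>) * norm (h2 \<omega>)"
      using Cauchy_Schwarz_ineq2 by simp
    also have "\<dots> \<le> (norm (h1 \<omega>))\<^sup>2 + (norm (h2 \<omega>))\<^sup>2"
      using sum_squares_bound[of "norm (h1 \<omega>)" "norm (h2 \<omega>)"]
        mult_nonneg_nonneg[OF norm_ge_zero norm_ge_zero, of "h1 \<omega>" "h2 \<omega>"] by linarith
    finally show "norm (h1 \<omega> \<bullet> h2 \<omega>) \<le> norm ((norm (h1 \<omega>))\<^sup>2 + (norm (h2 \<omega>))\<^sup>2)"
      by simp
  qed
qed (use assms in \<open>auto simp: square_integrable_def\<close>)

lemma square_integrable_inner_right: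
  fixes h :: "'a \<Rightarrow> 'b::{real_inner,second_countable_topology}"
  assumes "square_integrable M h"
  shows "square_integrable M (\<lambda>\<omega>. h \<omega> \<bullet> b)"
proof (rule square_integrable_bound)
  show "square_integrable M (\<lambda>\<omega>. norm b *\<^sub>R h \<omega>)"
    using assms by (rule square_integrable_scaleR)
  show "(\<lambda>\<omega>. h \<omega> \<bullet> b) \<in> borel_measurable M"
    using assms by (auto simp: square_integrable_def)
  show "norm (h \<omega> \<bullet> b) \<le> norm (norm b *\<^sub>R h \<omega>)" for \<omega>
    using Cauchy_Schwarz_ineq2[of "h \<omega>" b] by (simp add: mult.commute)
qed

lemma square_integrable_lipschitz_comp:
  fixes F :: "'b::{real_normed_vector,second_countable_topology} \<Rightarrow> 'c::{real_normed_vector,second_countable_topology}"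
  assumes M: "finite_measure M" and lip: "L-lipschitz_on UNIV F" and h: "square_integrable M h"
  shows "square_integrable M (\<lambda>\<omega>. F (h \<omega>))"
proof (rule square_integrable_bound)
  have L: "0 \<le> L" using lip by (rule lipschitz_on_nonneg)
  show "square_integrable M (\<lambda>\<omega>. norm (F 0) + L *\<^sub>R norm (h \<omega>))"
    using h by (intro square_integrable_add square_integrable_const[OF M] square_integrable_scaleR)
      (auto simp: square_integrable_def)
  have "F \<in> borel_measurable borel"
    using lip by (intro borel_measurable_continuous_onI lipschitz_on_continuous_on)
  then show "(\<lambda>\<omega>. F (h \<omega>)) \<in> borel_measurable M"
    using h measurable_compose by (auto simp: square_integrable_def)
  show "norm (F (h \<omega>)) \<le> norm (norm (F 0) + L *\<^sub>R norm (h \<omega>))" for \<omega>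
  proof -
    have "norm (F (h \<omega>) - F 0) \<le> L * norm (h \<omega>)"
      using lipschitz_onD[OF lip, of "h \<omega>" 0] by (simp add: dist_norm)
    then show ?thesis
      using norm_triangle_ineq2[of "F (h \<omega>)" "F 0"] L by simp
  qed
qed

lemma square_integrable_component_product:
  fixes h g :: "'a \<Rightarrow> 'b::{real_inner,second_countable_topology}"
  assumes "square_integrable M h" "square_integrable M g"
  shows "integrable M (\<lambda>\<omega>. (h \<omega> \<bullet> b) * (g \<omega> \<bullet> c))"
  using square_integrable_inner_integrable[OF square_integrable_inner_right[OF assms(1)]
      square_integrable_inner_right[OF assms(2)]]
  by simp

lemma (in sigma_finite_subalgebra) integral_inner_unbiased:
  fixes h g :: "'a \<Rightarrow> 'd::euclidean_space"
  assumes hF: "h \<in> borel_measurable F" and h: "square_integrable M h" and g: "square_integrable M g"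
    and unbiased: "\<And>b. b \<in> Basis \<Longrightarrow> AE \<omega> in M. real_cond_exp M F (\<lambda>\<omega>. g \<omega> \<bullet> b) \<omega> = h \<omega> \<bullet> b"
  shows "(\<integral>\<omega>. h \<omega> \<bullet> g \<omega> \<partial>M) = (\<integral>\<omega>. (norm (h \<omega>))\<^sup>2 \<partial>M)"
proof -
  have component: "(\<integral>\<omega>. (h \<omega> \<bullet> b) * (g \<omega> \<bullet> b) \<partial>M) = (\<integral>\<omega>. (h \<omega> \<bullet> b) * (h \<omega> \<bullet> b) \<partial>M)"
    if b: "b \<in> Basis" for b
  proof -
    have int: "integrable M (\<lambda>\<omega>. (h \<omega> \<bullet> b) * (g \<omega> \<bullet> b))"
      using h g by (rule square_integrable_component_product)
    have hbF: "(\<lambda>\<omega>. h \<omega> \<bullet> b) \<in> borel_measurable F"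
      using hF by measurable
    have gbM: "(\<lambda>\<omega>. g \<omega> \<bullet> b) \<in> borel_measurable M"
      using g by (auto simp: square_integrable_def)
    have "(\<integral>\<omega>. (h \<omega> \<bullet> b) * (g \<omega> \<bullet> b) \<partial>M)
        = (\<integral>\<omega>. (h \<omega> \<bullet> b) * real_cond_exp M F (\<lambda>\<omega>. g \<omega> \<bullet> b) \<omega> \<partial>M)"
      using real_cond_exp_intg(2)[OF int hbF gbM] by simp
    also have "\<dots> = (\<integral>\<omega>. (h \<omega> \<bullet> b) * (h \<omega> \<bullet> b) \<partial>M)"
    proof (rule integral_cong_AE)
      show "(\<lambda>\<omega>. (h \<omega> \<bullet> b) * real_cond_exp M F (\<lambda>\<omega>. g \<omega> \<bullet> b) \<omega>) \<in> borel_measurable M"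
        using real_cond_exp_intg(1)[OF int hbF gbM] by (rule borel_measurable_integrable)
      show "(\<lambda>\<omega>. (h \<omega> \<bullet> b) * (h \<omega> \<bullet> b)) \<in> borel_measurable M"
        using h by (auto simp: square_integrable_def)
      show "AE \<omega> in M. (h \<omega> \<bullet> b) * real_cond_exp M F (\<lambda>\<omega>. g \<omega> \<bullet> b) \<omega> = (h \<omega> \<bullet> b) * (h \<omega> \<bullet> b)"
        using unbiased[OF b] by eventually_elim simp
    qed
    finally show ?thesis .
  qed
  have "(\<integral>\<omega>. h \<omega> \<bullet> g \<omega> \<partial>M) = (\<Sum>b\<in>Basis. \<integral>\<omega>. (h \<omega> \<bullet> b) * (g \<omega> \<bullet> b) \<partial>M)"
    by (subst euclidean_inner)
      (intro Bochner_Integration.integral_sum square_integrable_component_product h g)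
  also have "\<dots> = (\<Sum>b\<in>Basis. \<integral>\<omega>. (h \<omega> \<bullet> b) * (h \<omega> \<bullet> b) \<partial>M)"
    by (intro sum.cong component refl)
  also have "\<dots> = (\<integral>\<omega>. h \<omega> \<bullet> h \<omega> \<partial>M)"
    by (subst (2) euclidean_inner)
      (intro Bochner_Integration.integral_sum[symmetric] square_integrable_component_product h)
  finally show ?thesis
    by (simp add: power2_norm_eq_inner)
qed

lemma sum_m_0 [simp]: "sum_m mu lam eta x1 G 0 = 0"
  by (simp add: sum_m_def)

lemma sum_m_Suc:
  "sum_m mu lam eta x1 G (Suc n) = mu *\<^sub>R sum_m mu lam eta x1 G n - eta (Suc n) *\<^sub>R G (Suc n)"
  by (simp add: sum_m_def Let_def)

lemma sum_x_Suc:
  assumes "n \<ge> 1"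
  shows "sum_x mu lam eta x1 G (Suc n) = sum_x mu lam eta x1 G n - (lam * eta n) *\<^sub>R G n
           + (1 - (1 - mu) * lam) *\<^sub>R sum_m mu lam eta x1 G n"
  using assms by (cases n) (simp_all add: sum_x_def sum_m_def Let_def)

lemma sum_state_closed:
  assumes const: "\<And>c. P (\<lambda>_. c)"
    and add: "\<And>h1 h2. P h1 \<Longrightarrow> P h2 \<Longrightarrow> P (\<lambda>\<omega>. h1 \<omega> + h2 \<omega>)"
    and diff: "\<And>h1 h2. P h1 \<Longrightarrow> P h2 \<Longrightarrow> P (\<lambda>\<omega>. h1 \<omega> - h2 \<omega>)"
    and scaleR: "\<And>c h. P h \<Longrightarrow> P (\<lambda>\<omega>. c *\<^sub>R h \<omega>)"
    and g: "\<And>k. 1 \<le> k \<Longrightarrow> k \<le> n \<Longrightarrow> P (g k)"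
  shows "P (\<lambda>\<omega>. fst (sum_state mu lam eta x1 (\<lambda>j. g j \<omega>) n))
       \<and> P (\<lambda>\<omega>. snd (sum_state mu lam eta x1 (\<lambda>j. g j \<omega>) n))"
  using g
proof (induction n)
  case 0
  then show ?case using const by simp
next
  case (Suc n)
  then have "P (\<lambda>\<omega>. fst (sum_state mu lam eta x1 (\<lambda>j. g j \<omega>) n))"
    "P (\<lambda>\<omega>. snd (sum_state mu lam eta x1 (\<lambda>j. g j \<omega>) n))" "P (g (Suc n))"
    by auto
  then show ?case
    by (simp add: Let_def) (intro conjI add diff scaleR)
qed

lemma sum_x_closed:
  assumes "\<And>c. P (\<lambda>_. c)"
    and "\<And>h1 h2. P h1 \<Longrightarrow> P h2 \<Longrightarrow> P (\<lambda>\<omega>. h1 \<omega> + h2 \<omega>)"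
    and "\<And>h1 h2. P h1 \<Longrightarrow> P h2 \<Longrightarrow> P (\<lambda>\<omega>. h1 \<omega> - h2 \<omega>)"
    and "\<And>c h. P h \<Longrightarrow> P (\<lambda>\<omega>. c *\<^sub>R h \<omega>)"
    and "\<And>k. 1 \<le> k \<Longrightarrow> k < t \<Longrightarrow> P (g k)"
  shows "P (\<lambda>\<omega>. sum_x mu lam eta x1 (\<lambda>j. g j \<omega>) t)"
  unfolding sum_x_def using sum_state_closed[of P "t - 1" g] assms by auto

lemma sum_m_closed:
  assumes "\<And>c. P (\<lambda>_. c)"
    and "\<And>h1 h2. P h1 \<Longrightarrow> P h2 \<Longrightarrow> P (\<lambda>\<omega>. h1 \<omega> + h2 \<omega>)"
    and "\<And>h1 h2. P h1 \<Longrightarrow> P h2 \<Longrightarrow> P (\<lambda>\<omega>. h1 \<omega> - h2 \<omega>)"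
    and "\<And>c h. P h \<Longrightarrow> P (\<lambda>\<omega>. c *\<^sub>R h \<omega>)"
    and "\<And>k. 1 \<le> k \<Longrightarrow> k \<le> t \<Longrightarrow> P (g k)"
  shows "P (\<lambda>\<omega>. sum_m mu lam eta x1 (\<lambda>j. g j \<omega>) t)"
  unfolding sum_m_def using sum_state_closed[of P t g] assms by auto

lemma space_past_sigma [simp]: "space (past_sigma M g t) = space M"
  unfolding past_sigma_def by (rule space_measure_of) auto

lemma sets_past_sigma:
  "sets (past_sigma M g t)
     = sigma_sets (space M) {g k -` A \<inter> space M | k A. k \<in> {1..<t} \<and> A \<in> sets borel}"
  unfolding past_sigma_def by (rule sets_measure_of) auto

lemma measurable_past_sigma:
  assumes "1 \<le> k" "k < t"
  shows "g k \<in> borel_measurable (past_sigma M g t)"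
proof (rule measurableI)
  fix A :: "'b set"
  assume "A \<in> sets borel"
  then have "g k -` A \<inter> space M \<in> {g k -` A \<inter> space M | k A. k \<in> {1..<t} \<and> A \<in> sets borel}"
    using assms by auto
  then show "g k -` A \<inter> space (past_sigma M g t) \<in> sets (past_sigma M g t)"
    unfolding space_past_sigma sets_past_sigma by (rule sigma_sets.Basic)
qed simp

lemma subalgebra_past_sigma:
  assumes "\<And>k. k \<ge> 1 \<Longrightarrow> g k \<in> borel_measurable M"
  shows "subalgebra M (past_sigma M g t)"
  unfolding subalgebra_def
proof
  show "sets (past_sigma M g t) \<subseteq> sets M"
    unfolding sets_past_sigma
    by (rule sets.sigma_sets_subset) (use assms measurable_sets in auto)
qed simp

locale stochastic_unified_momentum = prob_space M
  for M :: "'a measure" +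
  fixes gradf :: "'d::euclidean_space \<Rightarrow> 'd" and L mu lam G :: real
    and eta :: "nat \<Rightarrow> real" and x1 :: 'd and g :: "nat \<Rightarrow> 'a \<Rightarrow> 'd"
  assumes lipschitz_gradient: "L-lipschitz_on UNIV gradf"
    and mu_nonneg: "0 \<le> mu" and mu_less_1: "mu < 1"
    and lam_nonneg: "0 \<le> lam" and lam_le: "lam \<le> 1 / (1 - mu)"
    and noise_measurable: "\<And>k. k \<ge> 1 \<Longrightarrow> g k \<in> borel_measurable M"
    and noise_square_integrable: "\<And>k. k \<ge> 1 \<Longrightarrow> integrable M (\<lambda>\<omega>. (norm (g k \<omega>))\<^sup>2)"
    and noise_unbiased: "\<And>k b. k \<ge> 1 \<Longrightarrow> b \<in> Basis \<Longrightarrow>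
        AE \<omega> in M. real_cond_exp M (past_sigma M g k) (\<lambda>\<omega>. g k \<omega> \<bullet> b) \<omega>
                    = gradf (sum_x mu lam eta x1 (\<lambda>j. g j \<omega>) k) \<bullet> b"
    and noise_second_moment: "\<And>k. k \<ge> 1 \<Longrightarrow> (\<integral>\<omega>. (norm (g k \<omega>))\<^sup>2 \<partial>M) \<le> G\<^sup>2"
begin

abbreviation iterate :: "nat \<Rightarrow> 'a \<Rightarrow> 'd"
  where "iterate k \<omega> \<equiv> sum_x mu lam eta x1 (\<lambda>j. g j \<omega>) k"

abbreviation momentum :: "nat \<Rightarrow> 'a \<Rightarrow> 'd"
  where "momentum k \<omega> \<equiv> sum_m mu lam eta x1 (\<lambda>j. g j \<omega>) k"

lemma square_integrable_noise: "k \<ge> 1 \<Longrightarrow> square_integrable M (g k)"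
  using noise_measurable noise_square_integrable by (simp add: square_integrable_def)

lemma square_integrable_iterate: "square_integrable M (iterate k)"
  by (rule sum_x_closed[where P = "square_integrable M"])
    (simp_all add: square_integrable_const finite_measure_axioms square_integrable_add
      square_integrable_diff square_integrable_scaleR square_integrable_noise)

lemma square_integrable_momentum: "square_integrable M (momentum k)"
  by (rule sum_m_closed[where P = "square_integrable M"])
    (simp_all add: square_integrable_const finite_measure_axioms square_integrable_add
      square_integrable_diff square_integrable_scaleR square_integrable_noise)

lemma square_integrable_gradient: "square_integrable M (\<lambda>\<omega>. gradf (iterate k \<omega>))"
  using finite_measure_axioms lipschitz_gradient square_integrable_iterate
  by (rule square_integrable_lipschitz_comp)

lemma gradient_measurable_past: "(\<lambda>\<omega>. gradf (iterate k \<omega>)) \<in> borel_measurable (past_sigma M g k)"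
proof -
  have "iterate k \<in> borel_measurable (past_sigma M g k)"
    by (rule sum_x_closed[where P = "\<lambda>h. h \<in> borel_measurable (past_sigma M g k)"])
      (simp_all add: measurable_past_sigma)
  moreover have "gradf \<in> borel_measurable borel"
    using lipschitz_gradient by (intro borel_measurable_continuous_onI lipschitz_on_continuous_on)
  ultimately show ?thesis
    by (simp add: measurable_compose)
qed

lemma expectation_gradient_inner_noise:
  assumes "k \<ge> 1"
  shows "(\<integral>\<omega>. gradf (iterate k \<omega>) \<bullet> g k \<omega> \<partial>M) = (\<integral>\<omega>. (norm (gradf (iterate k \<omega>)))\<^sup>2 \<partial>M)"
proof -
  have "finite_measure_subalgebra M (past_sigma M g k)"
    using noise_measurable by unfold_locales (rule subalgebra_past_sigma)
  then interpret sigma_finite_subalgebra M "past_sigma M g k"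
    by (rule finite_measure_subalgebra_is_sigma_finite)
  show ?thesis
    using gradient_measurable_past square_integrable_gradient square_integrable_noise[OF assms]
      noise_unbiased[OF assms]
    by (rule integral_inner_unbiased)
qed

lemma expectation_gradient_inner_momentum_Suc:
  "(\<integral>\<omega>. gradf (iterate (Suc n) \<omega>) \<bullet> momentum (Suc n) \<omega> \<partial>M)
     = mu * (\<integral>\<omega>. gradf (iterate (Suc n) \<omega>) \<bullet> momentum n \<omega> \<partial>M)
       - eta (Suc n) * (\<integral>\<omega>. (norm (gradf (iterate (Suc n) \<omega>)))\<^sup>2 \<partial>M)"
proof -
  let ?d = "\<lambda>\<omega>. gradf (iterate (Suc n) \<omega>)"
  have "(\<integral>\<omega>. ?d \<omega> \<bullet> momentum (Suc n) \<omega> \<partial>M)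
      = (\<integral>\<omega>. mu * (?d \<omega> \<bullet> momentum n \<omega>) - eta (Suc n) * (?d \<omega> \<bullet> g (Suc n) \<omega>) \<partial>M)"
    by (simp add: sum_m_Suc inner_diff_right)
  also have "\<dots> = mu * (\<integral>\<omega>. ?d \<omega> \<bullet> momentum n \<omega> \<partial>M) - eta (Suc n) * (\<integral>\<omega>. ?d \<omega> \<bullet> g (Suc n) \<omega> \<partial>M)"
    by (simp add: square_integrable_inner_integrable square_integrable_gradient
        square_integrable_momentum square_integrable_noise)
  finally show ?thesis
    by (simp add: expectation_gradient_inner_noise)
qed

lemma expectation_gradient_inner_momentum_shift_le:
  assumes n: "n \<ge> 1"
  shows "(\<integral>\<omega>. gradf (iterate (Suc n) \<omega>) \<bullet> momentum n \<omega> \<partial>M)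
     \<le> (\<integral>\<omega>. gradf (iterate n \<omega>) \<bullet> momentum n \<omega> \<partial>M)
       + 2 * L * (\<integral>\<omega>. (norm (momentum n \<omega>))\<^sup>2 \<partial>M) + L * lam\<^sup>2 * G\<^sup>2 * (eta n)\<^sup>2"
proof -
  define c where "c = 1 - (1 - mu) * lam"
  define s where "s = lam * eta n"
  have L: "0 \<le> L" using lipschitz_gradient by (rule lipschitz_on_nonneg)
  have "(1 - mu) * lam \<le> 1" using lam_le mu_less_1 by (simp add: le_divide_eq mult.commute)
  then have c: "\<bar>c\<bar> \<le> 1" using mu_less_1 lam_nonneg by (simp add: c_def)
  have int_g: "integrable M (\<lambda>\<omega>. (norm (g n \<omega>))\<^sup>2)"
    using n by (rule noise_square_integrable)
  have int_m: "integrable M (\<lambda>\<omega>. (norm (momentum n \<omega>))\<^sup>2)"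
    using square_integrable_momentum by (simp add: square_integrable_def)
  have int_dm: "integrable M (\<lambda>\<omega>. gradf (iterate k \<omega>) \<bullet> momentum n \<omega>)" for k
    by (intro square_integrable_inner_integrable square_integrable_gradient square_integrable_momentum)
  have "(\<integral>\<omega>. gradf (iterate (Suc n) \<omega>) \<bullet> momentum n \<omega> \<partial>M)
     \<le> (\<integral>\<omega>. gradf (iterate n \<omega>) \<bullet> momentum n \<omega>
              + L * (s\<^sup>2 * (norm (g n \<omega>))\<^sup>2 + 2 * (norm (momentum n \<omega>))\<^sup>2) \<partial>M)"
  proof (rule integral_mono)
    fix \<omega>
    show "gradf (iterate (Suc n) \<omega>) \<bullet> momentum n \<omega>
       \<le> gradf (iterate n \<omega>) \<bullet> momentum n \<omega> + L * (s\<^sup>2 * (norm (g n \<omega>))\<^sup>2 + 2 * (norm (momentum n \<omega>))\<^sup>2)"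
      using lipschitz_inner_displacement_le[OF lipschitz_gradient c]
      by (simp add: sum_x_Suc[OF n] c_def s_def)
  qed (use int_dm int_g int_m in auto)
  also have "\<dots> = (\<integral>\<omega>. gradf (iterate n \<omega>) \<bullet> momentum n \<omega> \<partial>M)
      + L * s\<^sup>2 * (\<integral>\<omega>. (norm (g n \<omega>))\<^sup>2 \<partial>M) + 2 * L * (\<integral>\<omega>. (norm (momentum n \<omega>))\<^sup>2 \<partial>M)"
    using int_dm int_g int_m by (simp add: algebra_simps)
  also have "\<dots> \<le> (\<integral>\<omega>. gradf (iterate n \<omega>) \<bullet> momentum n \<omega> \<partial>M)
      + L * s\<^sup>2 * G\<^sup>2 + 2 * L * (\<integral>\<omega>. (norm (momentum n \<omega>))\<^sup>2 \<partial>M)"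
    using noise_second_moment[OF n] L by (simp add: mult_left_mono)
  finally show ?thesis
    by (simp add: s_def power_mult_distrib algebra_simps)
qed

theorem expectation_gradient_inner_momentum_le:
  assumes "t \<ge> 1"
  shows "(\<integral>\<omega>. gradf (iterate t \<omega>) \<bullet> momentum t \<omega> \<partial>M)
     \<le> - (\<Sum>k=1..t. mu ^ (t - k) * eta k * (\<integral>\<omega>. (norm (gradf (iterate k \<omega>)))\<^sup>2 \<partial>M))
       + 2 * L * (\<Sum>k=1..t-1. mu ^ (t - k) * (\<integral>\<omega>. (norm (momentum k \<omega>))\<^sup>2 \<partial>M))
       + L * lam\<^sup>2 * G\<^sup>2 * (\<Sum>k=1..t-1. mu ^ (t - k) * (eta k)\<^sup>2)"
proof -
  define A where "A k = (\<integral>\<omega>. gradf (iterate k \<omega>) \<bullet> momentum k \<omega> \<partial>M)" for k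
  define a where "a k = eta k * (\<integral>\<omega>. (norm (gradf (iterate k \<omega>)))\<^sup>2 \<partial>M)" for k
  define b where "b k = 2 * L * (\<integral>\<omega>. (norm (momentum k \<omega>))\<^sup>2 \<partial>M) + L * lam\<^sup>2 * G\<^sup>2 * (eta k)\<^sup>2" for k
  have "A t \<le> - (\<Sum>k=1..t. mu ^ (t - k) * a k) + (\<Sum>k=1..t-1. mu ^ (t - k) * b k)"
  proof (rule discounted_recursion_le[OF mu_nonneg _ _ assms])
    show "A 1 \<le> - a 1"
      using expectation_gradient_inner_momentum_Suc[of 0] by (simp add: A_def a_def)
    show "A (Suc n) \<le> mu * (A n + b n) - a (Suc n)" if "n \<ge> 1" for n
      unfolding expectation_gradient_inner_momentum_Suc A_def a_def b_def
      using expectation_gradient_inner_momentum_shift_le[OF that] mu_nonneg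
      by (simp add: mult_left_mono add.assoc)
  qed
  then show ?thesis
    by (simp add: A_def a_def b_def algebra_simps sum.distrib sum_distrib_left)
qed

end

theorem lemma3p4:
  fixes M :: "'a measure"
    and f :: "'d::euclidean_space \<Rightarrow> real" and gradf :: "'d \<Rightarrow> 'd"
    and L mu lam G :: real and eta :: "nat \<Rightarrow> real"
    and x1 :: 'd and g :: "nat \<Rightarrow> 'a \<Rightarrow> 'd" and t :: nat
  assumes "prob_space M"
    and diff: "\<And>x. (f has_derivative (\<lambda>h. gradf x \<bullet> h)) (at x)"
    and lip: "L-lipschitz_on UNIV gradf"
    and mu: "0 \<le> mu" "mu < 1"
    and lam: "0 \<le> lam" "lam \<le> 1 / (1 - mu)"
    and eta: "\<And>k. eta k > 0"
    and meas: "\<And>k. k \<ge> 1 \<Longrightarrow> g k \<in> borel_measurable M"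
    and sqint: "\<And>k. k \<ge> 1 \<Longrightarrow> integrable M (\<lambda>\<omega>. (norm (g k \<omega>))\<^sup>2)"
    and unbiased: "\<And>k b. k \<ge> 1 \<Longrightarrow> b \<in> Basis \<Longrightarrow>
        AE \<omega> in M. real_cond_exp M (past_sigma M g k) (\<lambda>\<omega>. g k \<omega> \<bullet> b) \<omega>
                    = gradf (sum_x mu lam eta x1 (\<lambda>j. g j \<omega>) k) \<bullet> b"
    and bounded: "\<And>k. k \<ge> 1 \<Longrightarrow> integral\<^sup>L M (\<lambda>\<omega>. (norm (g k \<omega>))\<^sup>2) \<le> G\<^sup>2"
    and t: "t \<ge> 1"
  shows "integral\<^sup>L M (\<lambda>\<omega>. gradf (sum_x mu lam eta x1 (\<lambda>j. g j \<omega>) t) \<bullet> sum_m mu lam eta x1 (\<lambda>j. g j \<omega>) t)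
     \<le> - (\<Sum>k=1..t. mu ^ (t - k) * eta k *
               integral\<^sup>L M (\<lambda>\<omega>. (norm (gradf (sum_x mu lam eta x1 (\<lambda>j. g j \<omega>) k)))\<^sup>2))
       + 2 * L * (\<Sum>k=1..t-1. mu ^ (t - k) *
               integral\<^sup>L M (\<lambda>\<omega>. (norm (sum_m mu lam eta x1 (\<lambda>j. g j \<omega>) k))\<^sup>2))
       + L * lam\<^sup>2 * G\<^sup>2 * (\<Sum>k=1..t-1. mu ^ (t - k) * (eta k)\<^sup>2)"
proof -
  interpret stochastic_unified_momentum M gradf L mu lam G eta x1 g
    using \<open>prob_space M\<close> lip mu lam meas sqint unbiased bounded
    by (simp add: stochastic_unified_momentum_def stochastic_unified_momentum_axioms_def)
  show ?thesis
    using t by (rule expectation_gradient_inner_momentum_le)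
qed

end
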